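(* Let $s_k, y_k \in \mathbb{R}^n$ be vectors with $y_k^{T}s_k \neq 0$, and define $$H_{k+1} = I - \frac{y_k s_k^{T} + s_k y_k^{T}}{y_k^{T}s_k} + 2\,\frac{y_k^{T}y_k}{(y_k^{T}s_k)^2}\, s_k s_k^{T}.$$ Then $H_{k+1}$ is symmetric positive definite and all of its eigenvalues are greater than $1/2$.
   Context: $I$ denotes the $n\times n$ identity matrix and $\|\cdot\|$ the Euclidean norm. In the paper, $s_k = x_{k+1}-x_k$ and $y_k = \nabla f(x_{k+1}) - \nabla f(x_k)$, but the claim is purely algebraic in $s_k, y_k$. *)

theory Defs
  imports "HOL-Analysis.Analysis"
begin

definition outer :: "real^'n \<Rightarrow> real^'n \<Rightarrow> real^'n^'n" where
  "outer u v = (\<chi> i j. u $ i * v $ j)"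

definition Hnext :: "real^'n \<Rightarrow> real^'n \<Rightarrow> real^'n^'n" where
  "Hnext s y = mat 1 - (1 / (y \<bullet> s)) *\<^sub>R (outer y s + outer s y)
      + (2 * (y \<bullet> y) / (y \<bullet> s)^2) *\<^sub>R outer s s"

definition symmetric_matrix :: "real^'n^'n \<Rightarrow> bool" where
  "symmetric_matrix A \<longleftrightarrow> transpose A = A"

definition pos_def :: "real^'n^'n \<Rightarrow> bool" where
  "pos_def A \<longleftrightarrow> symmetric_matrix A \<and> (\<forall>x. x \<noteq> 0 \<longrightarrow> x \<bullet> (A *v x) > 0)"

definition is_eigenvalue :: "real^'n^'n \<Rightarrow> real \<Rightarrow> bool" where
  "is_eigenvalue A c \<longleftrightarrow> (\<exists>v. v \<noteq> 0 \<and> A *v v = c *\<^sub>R v)"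

end

theory Submission
  imports Defs
begin

text \<open>Writing \<open>t = (s \<bullet> x) / (y \<bullet> s)\<close>, the quadratic form of \<open>H = Hnext s y\<close> is
  \<open>|x|\<^sup>2 - 2 t (y \<bullet> x) + 2 t\<^sup>2 |y|\<^sup>2 = |x|\<^sup>2/2 + |x - 2 t y|\<^sup>2/2\<close>.
  The square vanishes only for \<open>x = 2 t y\<close>, and then \<open>s \<bullet> x = 2 t (y \<bullet> s) = 2 (s \<bullet> x)\<close>
  forces \<open>t = 0\<close> and so \<open>x = 0\<close>. Hence \<open>x \<bullet> H x > |x|\<^sup>2/2\<close> for \<open>x \<noteq> 0\<close>, which gives
  positive definiteness and, applied to an eigenvector, the eigenvalue bound.\<close>

lemma outer_mult_vec: "outer u v *v x = (v \<bullet> x) *\<^sub>R u"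
  by (simp add: vec_eq_iff outer_def matrix_vector_mult_def inner_vec_def
      sum_distrib_left mult.commute mult.left_commute)

lemma symmetric_matrix_Hnext: "symmetric_matrix (Hnext s y)"
  by (simp add: symmetric_matrix_def Hnext_def vec_eq_iff transpose_def outer_def mat_def
      mult.commute)

lemma Hnext_mult_vec:
  "Hnext s y *v x = x - (1 / (y \<bullet> s)) *\<^sub>R ((s \<bullet> x) *\<^sub>R y + (y \<bullet> x) *\<^sub>R s)
     + (2 * (y \<bullet> y) / (y \<bullet> s)^2) *\<^sub>R ((s \<bullet> x) *\<^sub>R s)"
  by (simp add: Hnext_def matrix_vector_mult_add_rdistrib matrix_vector_mult_diff_rdistrib
      scaleR_matrix_vector_assoc[symmetric] outer_mult_vec scaleR_add_right)

lemma inner_Hnext_mult_vec: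
  "x \<bullet> (Hnext s y *v x) = (x \<bullet> x) / 2 + (norm (x - (2 * ((s \<bullet> x) / (y \<bullet> s))) *\<^sub>R y))\<^sup>2 / 2"
proof -
  define t where "t = (s \<bullet> x) / (y \<bullet> s)"
  have "x \<bullet> (Hnext s y *v x) = x \<bullet> x - 2 * t * (y \<bullet> x) + 2 * t\<^sup>2 * (y \<bullet> y)"
    by (simp add: Hnext_mult_vec t_def inner_diff_right inner_add_right inner_commute
        power_divide power2_eq_square algebra_simps)
  moreover have "(norm (x - (2 * t) *\<^sub>R y))\<^sup>2 = x \<bullet> x - 4 * t * (y \<bullet> x) + 4 * t\<^sup>2 * (y \<bullet> y)"
    unfolding power2_norm_eq_inner
    by (simp add: inner_diff_right inner_diff_left inner_commute power2_eq_square algebra_simps)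
  ultimately show ?thesis
    unfolding t_def[symmetric] by linarith
qed

lemma inner_Hnext_mult_vec_gt:
  assumes "y \<bullet> s \<noteq> 0" and "x \<noteq> 0"
  shows "x \<bullet> (Hnext s y *v x) > (x \<bullet> x) / 2"
proof -
  define t where "t = (s \<bullet> x) / (y \<bullet> s)"
  have "x - (2 * t) *\<^sub>R y \<noteq> 0"
  proof
    assume "x - (2 * t) *\<^sub>R y = 0"
    then have x_eq: "x = (2 * t) *\<^sub>R y"
      by simp
    then have "s \<bullet> x = 2 * t * (y \<bullet> s)"
      by (simp add: inner_commute)
    then have "s \<bullet> x = 2 * (s \<bullet> x)"
      using assms(1) by (simp add: t_def)
    then have "t = 0"
      by (simp add: t_def)
    with x_eq assms(2) show False
      by simp
  qed
  then show ?thesis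
    by (simp add: inner_Hnext_mult_vec flip: t_def)
qed

lemma pos_def_if_quadratic_form_gt:
  fixes A :: "real^'n^'n"
  assumes "symmetric_matrix A" and "c \<ge> 0"
    and "\<And>x. x \<noteq> 0 \<Longrightarrow> x \<bullet> (A *v x) > c * (x \<bullet> x)"
  shows "pos_def A"
  unfolding pos_def_def
proof (intro conjI allI impI assms(1))
  fix x :: "real^'n"
  assume "x \<noteq> 0"
  then have "c * (x \<bullet> x) \<ge> 0"
    using assms(2) by simp
  with assms(3)[OF \<open>x \<noteq> 0\<close>] show "x \<bullet> (A *v x) > 0"
    by linarith
qed

lemma eigenvalue_gt_if_quadratic_form_gt:
  fixes A :: "real^'n^'n"
  assumes "\<And>x. x \<noteq> 0 \<Longrightarrow> x \<bullet> (A *v x) > c * (x \<bullet> x)" and "is_eigenvalue A \<mu>"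
  shows "\<mu> > c"
proof -
  obtain v where "v \<noteq> 0" and "A *v v = \<mu> *\<^sub>R v"
    using assms(2) unfolding is_eigenvalue_def by blast
  with assms(1) have "\<mu> * (v \<bullet> v) > c * (v \<bullet> v)"
    by fastforce
  moreover have "v \<bullet> v > 0"
    using \<open>v \<noteq> 0\<close> by simp
  ultimately show ?thesis
    by simp
qed

theorem lemma1:
  fixes s y :: "real^'n"
  assumes "y \<bullet> s \<noteq> 0"
  shows "symmetric_matrix (Hnext s y) \<and> pos_def (Hnext s y)
         \<and> (\<forall>c. is_eigenvalue (Hnext s y) c \<longrightarrow> c > 1/2)"
proof -
  have form_gt: "x \<bullet> (Hnext s y *v x) > 1/2 * (x \<bullet> x)" if "x \<noteq> 0" for x
    using inner_Hnext_mult_vec_gt[OF assms that] by simp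
  show ?thesis
    using symmetric_matrix_Hnext pos_def_if_quadratic_form_gt[OF symmetric_matrix_Hnext _ form_gt]
      eigenvalue_gt_if_quadratic_form_gt[OF form_gt] by simp
qed

end
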